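(* Let $x\in(0,\infty)$. Then: (1) for $k\in\mathbb{Z}$, $a^{\rm st}_k(x)=g(s_k(x))$ and $b^{\rm st}_k(x)=h(s_k(x))$; (2) for $j<k$ in $\mathbb{Z}$, $m^{\rm st}_k(x)-m^{\rm st}_j(x)=\sum_{i=j+1}^k\frac{1}{Z(s_i(x))}$ and $n^{\rm st}_j(x)-n^{\rm st}_k(x)=\sum_{i=j+1}^k\frac{s_i(x)}{Z(s_i(x))}$; in particular $m^{\rm st}_k(x)-m^{\rm st}_{k-1}(x)=Z(s_k(x))^{-1}$ and $n^{\rm st}_{k-1}(x)-n^{\rm st}_k(x)=s_k(x)Z(s_k(x))^{-1}$; (3) for $j,k\in\mathbb{N}$, $\mathcal{M}_{j+1,k+1}(x)=\Big(\sum_{i=-j}^{k+1}\frac{1}{Z(s_i(x))}\Big)^{-1}\sum_{i=-j}^{k+1}\frac{s_i(x)}{Z(s_i(x))}$; (4) $\mathcal{M}(x)=\sum_{i\in\mathbb{Z}}\frac{s_i(x)}{Z(s_i(x))}$.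
   Context: For $x>0$, $\omega=\sqrt{8x+1}$, $c(x)=\frac{(\omega+3)^2}{16}$, $d(x)=\frac{(\omega+3)^2}{8(\omega+1)}$, $s(x)=\frac{(\omega-1)^2}{4(\omega+7)}$; $s_0=\mathrm{id}$, $s_{-1}(x)=1/s(1/x)$, $s_i=s\circ s_{i-1}$, $s_{-i}=s_{-1}\circ s_{-(i-1)}$ ($i\in\mathbb{N}_+$); $c_j=c\circ s_j$, $d_j=d\circ s_j$. Product convention: $\prod_{i=0}^kh_i=h_0\cdots h_k$ for $k\ge0$, $=1$ for $k=-1$, $=h_{k+1}^{-1}\cdots h_{-1}^{-1}$ for $k\le-2$. $Z(x)=\sum_{k\in\mathbb{Z}}\prod_{i=0}^k(c_i(x)-1)$; $f(x)=\frac{xc(x)d(x)}{(c(x)+xd(x))^2}$, $g(x)=Z(x)^{-1}c(x)f(x)$, $h(x)=Z(x)^{-1}xd(x)f(x)$. ABMN system on $\mathbb{Z}$: $a_i,b_i\ge0$, $m_i,n_i\in\mathbb{R}$ with $(a_i+b_i)(m_i+a_i)=a_im_{i+1}+b_im_{i-1}$, $(a_i+b_i)(n_i+b_i)=a_in_{i+1}+b_in_{i-1}$, $(a_i+b_i)^2=b_i(m_{i+1}-m_{i-1})$, $(a_i+b_i)^2=a_i(n_{i-1}-n_{i+1})$; positive if all $a_i,b_i>0$; standard if positive with $\lim_{-\infty}m=0$, $\lim_\infty n=0$, $\lim_\infty m=1$. $(a^{\rm st}(x),b^{\rm st}(x),m^{\rm st}(x),n^{\rm st}(x))$ is the unique standard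 solution with central ratio $\frac{n_{-1}-n_0}{m_0-m_{-1}}=x$; $\mathcal{M}(x)=\lim_{i\to-\infty}n^{\rm st}_i(x)$. For $p,r\in\mathbb{N}_+$, $\mathcal{M}_{p,r}(x)=\frac{n_{-p}-n_r}{m_r-m_{-p}}$ computed for any positive ABMN solution with central ratio $x$ (e.g. the standard one). *)

theory Defs
  imports "HOL-Analysis.Analysis"
begin

definition omega :: "real \<Rightarrow> real" where
  "omega x = sqrt (8 * x + 1)"

definition cfun :: "real \<Rightarrow> real" where
  "cfun x = (omega x + 3)^2 / 16"

definition dfun :: "real \<Rightarrow> real" where
  "dfun x = (omega x + 3)^2 / (8 * (omega x + 1))"

definition sfun :: "real \<Rightarrow> real" where
  "sfun x = (omega x - 1)^2 / (4 * (omega x + 7))"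

definition sneg1 :: "real \<Rightarrow> real" where
  "sneg1 x = 1 / sfun (1 / x)"

definition siter :: "int \<Rightarrow> real \<Rightarrow> real" where
  "siter k x = (if 0 \<le> k then (sfun ^^ nat k) x else (sneg1 ^^ nat (- k)) x)"

definition cj :: "int \<Rightarrow> real \<Rightarrow> real" where
  "cj j x = cfun (siter j x)"

definition dj :: "int \<Rightarrow> real \<Rightarrow> real" where
  "dj j x = dfun (siter j x)"

definition prodZ :: "(int \<Rightarrow> real) \<Rightarrow> int \<Rightarrow> real" where
  "prodZ h k = (if 0 \<le> k then (\<Prod>i\<in>{0..k}. h i) else (\<Prod>i\<in>{k+1..-1}. inverse (h i)))"

definition Zfun :: "real \<Rightarrow> real" where
  "Zfun x = (\<Sum>\<^sub>\<infinity>k\<in>(UNIV::int set). prodZ (\<lambda>i. cj i x - 1) k)"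

definition ffun :: "real \<Rightarrow> real" where
  "ffun x = x * cfun x * dfun x / (cfun x + x * dfun x)^2"

definition gfun :: "real \<Rightarrow> real" where
  "gfun x = inverse (Zfun x) * cfun x * ffun x"

definition hfun :: "real \<Rightarrow> real" where
  "hfun x = inverse (Zfun x) * x * dfun x * ffun x"

definition ABMN :: "(int \<Rightarrow> real) \<Rightarrow> (int \<Rightarrow> real) \<Rightarrow> (int \<Rightarrow> real) \<Rightarrow> (int \<Rightarrow> real) \<Rightarrow> bool" where
  "ABMN a b m n \<longleftrightarrow> (\<forall>i. a i \<ge> 0 \<and> b i \<ge> 0 \<and>
      (a i + b i) * (m i + a i) = a i * m (i+1) + b i * m (i-1) \<and>
      (a i + b i) * (n i + b i) = a i * n (i+1) + b i * n (i-1) \<and>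
      (a i + b i)^2 = b i * (m (i+1) - m (i-1)) \<and>
      (a i + b i)^2 = a i * (n (i-1) - n (i+1)))"

definition ABMN_positive :: "(int \<Rightarrow> real) \<Rightarrow> (int \<Rightarrow> real) \<Rightarrow> (int \<Rightarrow> real) \<Rightarrow> (int \<Rightarrow> real) \<Rightarrow> bool" where
  "ABMN_positive a b m n \<longleftrightarrow> ABMN a b m n \<and> (\<forall>i. a i > 0 \<and> b i > 0)"

definition ABMN_standard :: "(int \<Rightarrow> real) \<Rightarrow> (int \<Rightarrow> real) \<Rightarrow> (int \<Rightarrow> real) \<Rightarrow> (int \<Rightarrow> real) \<Rightarrow> bool" where
  "ABMN_standard a b m n \<longleftrightarrow> ABMN_positive a b m n \<and>
     (m \<longlongrightarrow> 0) at_bot \<and> (n \<longlongrightarrow> 0) at_top \<and> (m \<longlongrightarrow> 1) at_top"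

definition central_ratio :: "(int \<Rightarrow> real) \<Rightarrow> (int \<Rightarrow> real) \<Rightarrow> real" where
  "central_ratio m n = (n (-1) - n 0) / (m 0 - m (-1))"

definition st :: "real \<Rightarrow> (int \<Rightarrow> real) \<times> (int \<Rightarrow> real) \<times> (int \<Rightarrow> real) \<times> (int \<Rightarrow> real)" where
  "st x = (THE (a, b, m, n). ABMN_standard a b m n \<and> central_ratio m n = x)"

definition ast :: "real \<Rightarrow> int \<Rightarrow> real" where "ast x = fst (st x)"
definition bst :: "real \<Rightarrow> int \<Rightarrow> real" where "bst x = fst (snd (st x))"
definition mst :: "real \<Rightarrow> int \<Rightarrow> real" where "mst x = fst (snd (snd (st x)))"
definition nst :: "real \<Rightarrow> int \<Rightarrow> real" where "nst x = snd (snd (snd (st x)))"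

definition Mlim :: "real \<Rightarrow> real" where
  "Mlim x = Lim at_bot (nst x)"

definition Mpr :: "nat \<Rightarrow> nat \<Rightarrow> real \<Rightarrow> real" where
  "Mpr p r x = (nst x (- int p) - nst x (int r)) / (mst x (int r) - mst x (- int p))"

end

theory Submission
  imports Defs
begin

text \<open>
  Put p i = m i - m (i - 1) and q i = n (i - 1) - n i. For positive a i, b i the four
  ABMN equations at i say exactly p i = a i^2 / b i, p (i + 1) = b i + 2 a i,
  q i = a i + 2 b i and q (i + 1) = b i^2 / a i. Hence r i = q i / p i obeys
  r (i + 1) = s (r i) and p (i + 1) = (c (r i) - 1) p i, so central ratio x forces
  r i = s_i x, and since Z y = (c y - 1) Z (s y) the increments p i are proportional to
  1 / Z (s_i x). These sum to 1, so the boundary conditions determine m and n as partial sums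
  of 1 / Z (s_i x) and s_i x / Z (s_i x), and a, b are linear in p, q. Conversely these
  sequences form a standard solution, which identifies st x.
\<close>

lemma int_fun_const:
  fixes D :: "int \<Rightarrow> 'a"
  assumes "\<And>k. D k = D (k - 1)"
  shows "D k = D 0"
proof (induction k rule: int_induct[where k = 0])
  case (step1 i) then show ?case using assms[of "i + 1"] by simp
next
  case (step2 i) then show ?case using assms[of i] by simp
qed simp

lemma sum_telescope_int:
  fixes D :: "int \<Rightarrow> 'a :: ab_group_add"
  assumes "j \<le> k"
  shows "(\<Sum>i\<in>{j + 1..k}. D i - D (i - 1)) = D k - D j"
  using assms
proof (induction k rule: int_ge_induct)
  case (step k)
  have "{j + 1..k + 1} = insert (k + 1) {j + 1..k}" using step.hyps by auto
  then show ?case using step by simp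
qed simp

lemma eq_if_same_increments_and_limit:
  fixes f g :: "int \<Rightarrow> real"
  assumes "\<And>k. f k - f (k - 1) = g k - g (k - 1)" "(f \<longlongrightarrow> L) F" "(g \<longlongrightarrow> L) F" "F \<noteq> bot"
  shows "f = g"
proof -
  have "f k - g k = f (k - 1) - g (k - 1)" for k
    using assms(1)[of k] by simp
  then have const: "f k - g k = f 0 - g 0" for k by (rule int_fun_const)
  have "((\<lambda>k. f k - g k) \<longlongrightarrow> L - L) F" using assms(2,3) by (rule tendsto_diff)
  moreover have "(\<lambda>k. f k - g k) = (\<lambda>k. f 0 - g 0)" by (rule ext) (rule const)
  ultimately have "((\<lambda>k. f 0 - g 0) \<longlongrightarrow> 0) F" by simp
  then have "f 0 - g 0 = 0" using assms(4) by (simp add: tendsto_const_iff)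
  then show ?thesis using const by (simp add: fun_eq_iff)
qed

lemma bij_betw_pred_int: "bij_betw (\<lambda>k::int. k - 1) UNIV UNIV"
  by (rule bij_betwI[where g = "\<lambda>k. k + 1"]) auto

lemma summable_ratio_test_eventually:
  fixes f :: "nat \<Rightarrow> 'a :: banach"
  assumes "c < 1" "eventually (\<lambda>n. norm (f (Suc n)) \<le> c * norm (f n)) sequentially"
  shows "summable f"
proof -
  obtain N where "\<And>n. n \<ge> N \<Longrightarrow> norm (f (Suc n)) \<le> c * norm (f n)"
    using assms(2) by (auto simp: eventually_sequentially)
  then show ?thesis using assms(1) by (rule summable_ratio_test[rotated])
qed

lemma summable_on_int_nonneg:
  fixes f :: "int \<Rightarrow> real"
  assumes "\<And>i. f i \<ge> 0" "summable (\<lambda>n. f (int n))" "summable (\<lambda>n. f (- int n - 1))"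
  shows "f summable_on UNIV"
proof -
  have inj: "inj (\<lambda>n::nat. - int n - 1)" by (auto simp: inj_def)
  have "(\<lambda>n. f (int n)) summable_on UNIV" "(\<lambda>n. f (- int n - 1)) summable_on UNIV"
    using assms by (auto intro: summable_nonneg_imp_summable_on)
  then have "f summable_on range int" "f summable_on range (\<lambda>n::nat. - int n - 1)"
    using summable_on_reindex[of int UNIV f] summable_on_reindex[OF inj, of f] by (simp_all add: o_def)
  then have "f summable_on (range int \<union> range (\<lambda>n::nat. - int n - 1))"
    by (rule summable_on_union)
  moreover have "k \<in> range int \<union> range (\<lambda>n::nat. - int n - 1)" for k
  proof (cases "k \<ge> 0")
    case True then have "k = int (nat k)" by simp
    then show ?thesis by blast
  next
    case False then have "k = - int (nat (- k - 1)) - 1" by simp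
    then show ?thesis by blast
  qed
  ultimately show ?thesis by (metis UNIV_eq_I)
qed

lemma infsum_atMost_greaterThan:
  fixes f :: "int \<Rightarrow> 'a :: banach"
  assumes "f summable_on UNIV"
  shows "infsum f UNIV = infsum f {..k} + infsum f {k<..}"
proof -
  have "UNIV = {..k} \<union> {k<..}" by auto
  then show ?thesis
    using infsum_Un_disjoint[of f "{..k}" "{k<..}"] summable_on_subset_banach[OF assms] by force
qed

lemma infsum_atMost_pred:
  fixes f :: "int \<Rightarrow> 'a :: banach"
  assumes "f summable_on UNIV"
  shows "infsum f {..k} = infsum f {..k - 1} + f k"
proof -
  have "{..k} = {..k - 1} \<union> {k}" by auto
  then show ?thesis
    using infsum_Un_disjoint[of f "{..k - 1}" "{k}"] summable_on_subset_banach[OF assms] by simp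
qed

lemma infsum_greaterThan_pred:
  fixes f :: "int \<Rightarrow> 'a :: banach"
  assumes "f summable_on UNIV"
  shows "infsum f {k - 1<..} = f k + infsum f {k<..}"
proof -
  have "{k - 1<..} = {k} \<union> {k<..}" by auto
  then show ?thesis
    using infsum_Un_disjoint[of f "{k}" "{k<..}"] summable_on_subset_banach[OF assms] by simp
qed

lemma infsum_tendsto_exhausting:
  fixes f :: "'a \<Rightarrow> real"
  assumes sum: "f summable_on UNIV" and nonneg: "\<And>i. f i \<ge> 0"
    and exhausting: "\<And>X. finite X \<Longrightarrow> eventually (\<lambda>k. X \<subseteq> A k) F"
  shows "((\<lambda>k. infsum f (A k)) \<longlongrightarrow> infsum f UNIV) F"
proof (rule order_tendstoI)
  fix u assume "infsum f UNIV < u"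
  moreover have "infsum f (A k) \<le> infsum f UNIV" for k
    using sum nonneg by (intro infsum_mono_neutral) (auto intro: summable_on_subset_banach)
  ultimately show "eventually (\<lambda>k. infsum f (A k) < u) F"
    by (intro always_eventually) (meson le_less_trans)
next
  fix l assume "l < infsum f UNIV"
  then have "eventually (\<lambda>X. l < sum f X) (finite_subsets_at_top UNIV)"
    using order_tendstoD(1)[OF infsum_tendsto[OF sum]] by simp
  then obtain X where X: "finite X" "l < sum f X"
    unfolding eventually_finite_subsets_at_top by blast
  show "eventually (\<lambda>k. l < infsum f (A k)) F"
    using exhausting[OF X(1)]
  proof eventually_elim
    case (elim k)
    then have "sum f X \<le> infsum f (A k)"
      using X(1) nonneg summable_on_subset_banach[OF sum] by (intro finite_sum_le_infsum) auto
    then show ?case using X(2) by simp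
  qed
qed

lemma eventually_atMost_superset: "finite (X :: int set) \<Longrightarrow> eventually (\<lambda>k. X \<subseteq> {..k}) at_top"
  by (rule eventually_mono[OF eventually_ge_at_top[of "Max (insert 0 X)"]]) auto

lemma eventually_greaterThan_superset: "finite (X :: int set) \<Longrightarrow> eventually (\<lambda>k. X \<subseteq> {k<..}) at_bot"
  by (rule eventually_mono[OF eventually_le_at_bot[of "Min (insert 0 X) - 1"]]) fastforce

lemma prodZ_rec: "(\<And>i. h i \<noteq> 0) \<Longrightarrow> prodZ h k = prodZ h (k - 1) * h k"
proof -
  assume h: "\<And>i. h i \<noteq> 0"
  consider "k \<ge> 1" | "k = 0" | "k = -1" | "k \<le> -2" by linarith
  then show ?thesis
  proof cases
    case 1
    then have "{0..k} = insert k {0..k - 1}" by auto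
    with 1 show ?thesis by (simp add: prodZ_def mult.commute)
  next
    case 4
    then have "{k..-1} = insert k {k + 1..-1}" by auto
    with 4 h[of k] show ?thesis by (simp add: prodZ_def)
  qed (use h in \<open>simp_all add: prodZ_def\<close>)
qed

lemma prodZ_pos: "(\<And>i. h i > 0) \<Longrightarrow> prodZ h k > 0"
  unfolding prodZ_def by (auto intro!: prod_pos)

lemma prodZ_unique:
  assumes "\<And>i. h i \<noteq> 0" "\<And>k. R k = R (k - 1) * h k" "R (-1) = 1"
  shows "R k = prodZ h k"
proof -
  have step: "R j / prodZ h j = R (j - 1) / prodZ h (j - 1)" for j
    using assms(1)[of j] assms(2)[of j] prodZ_rec[OF assms(1), where k = j] by simp
  then have "R k / prodZ h k = R 0 / prodZ h 0" by (rule int_fun_const)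
  also have "\<dots> = 1" using step[of 0] assms(3) by (simp add: prodZ_def)
  finally show ?thesis using assms(1) by (simp add: prodZ_def split: if_splits)
qed

section \<open>The parametrisation by \<open>\<tau>\<close>\<close>

text \<open>Substituting \<open>\<omega> = 4\<tau> + 1\<close>, i.e. \<open>y = \<tau>(1 + 2\<tau>)\<close>, makes \<open>c, d, s, f, g, h\<close>
  rational in \<open>\<tau>\<close>.\<close>
definition tau :: "real \<Rightarrow> real" where
  "tau y = (omega y - 1) / 4"

lemma omega_eq_tau: "omega y = 4 * tau y + 1"
  unfolding tau_def by (simp add: field_simps)

lemma tau_pos: "y > 0 \<Longrightarrow> tau y > 0"
  unfolding tau_def omega_def by (simp add: real_less_rsqrt)

lemma eq_tau_mult: "y > 0 \<Longrightarrow> y = tau y * (1 + 2 * tau y)"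
proof -
  assume "y > 0"
  then have "(4 * tau y + 1)^2 = 8 * y + 1"
    by (simp flip: omega_eq_tau add: omega_def)
  then show ?thesis by (simp add: power2_eq_square algebra_simps)
qed

lemma tau_mult_eq: "t > 0 \<Longrightarrow> tau (t * (1 + 2 * t)) = t"
proof -
  assume "t > 0"
  have "8 * (t * (1 + 2 * t)) + 1 = (4 * t + 1)^2" by (simp add: power2_eq_square algebra_simps)
  with \<open>t > 0\<close> show ?thesis by (simp add: tau_def omega_def)
qed

lemma cfun_eq_tau: "cfun y = (tau y + 1)^2"
  unfolding cfun_def omega_eq_tau by (simp add: power2_eq_square algebra_simps)

lemma cfun_minus_one_eq_tau: "cfun y - 1 = tau y * (tau y + 2)"
  unfolding cfun_eq_tau by (simp add: power2_eq_square algebra_simps)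

lemma dfun_eq_tau: "y > 0 \<Longrightarrow> dfun y = (tau y + 1)^2 / (2 * tau y + 1)"
  unfolding dfun_def omega_eq_tau using tau_pos[of y] by (simp add: power2_eq_square field_simps)

lemma sfun_eq_tau: "y > 0 \<Longrightarrow> sfun y = (tau y)^2 / (tau y + 2)"
  unfolding sfun_def omega_eq_tau using tau_pos[of y] by (simp add: power2_eq_square field_simps)

lemma mult_dfun_eq_tau: "y > 0 \<Longrightarrow> y * dfun y = tau y * (tau y + 1)^2"
  by (subst (1) eq_tau_mult) (use tau_pos[of y] in \<open>simp_all add: dfun_eq_tau field_simps\<close>)

lemma ffun_eq_tau: "y > 0 \<Longrightarrow> ffun y = tau y / (tau y + 1)^2"
proof -
  assume "y > 0"
  define u where "u = tau y + 1"
  have u: "u > 0" using tau_pos[OF \<open>y > 0\<close>] by (simp add: u_def)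
  have "cfun y + y * dfun y = u^3"
    using \<open>y > 0\<close> by (simp add: cfun_eq_tau mult_dfun_eq_tau u_def power2_eq_square power3_eq_cube algebra_simps)
  moreover have "ffun y = cfun y * (y * dfun y) / (cfun y + y * dfun y)^2"
    by (simp add: ffun_def ac_simps)
  ultimately have "ffun y = u^2 * ((u - 1) * u^2) / (u^3)^2"
    using \<open>y > 0\<close> by (simp add: mult_dfun_eq_tau cfun_eq_tau u_def)
  also have "\<dots> = (u - 1) / u^2"
    using u by (simp add: divide_simps power2_eq_square power3_eq_cube)
  finally show ?thesis by (simp add: u_def)
qed

lemma gfun_eq_tau: "y > 0 \<Longrightarrow> gfun y = tau y / Zfun y"
  using tau_pos[of y] by (simp add: gfun_def ffun_eq_tau cfun_eq_tau divide_inverse)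

lemma hfun_eq_tau: "y > 0 \<Longrightarrow> hfun y = (tau y)^2 / Zfun y"
proof -
  assume "y > 0"
  have "hfun y = inverse (Zfun y) * (y * dfun y) * ffun y"
    by (simp add: hfun_def ac_simps)
  also have "\<dots> = inverse (Zfun y) * (tau y * (tau y + 1)^2 * (tau y / (tau y + 1)^2))"
    using \<open>y > 0\<close> by (simp add: mult_dfun_eq_tau ffun_eq_tau)
  also have "tau y * (tau y + 1)^2 * (tau y / (tau y + 1)^2) = (tau y)^2"
    using tau_pos[OF \<open>y > 0\<close>] by (simp add: power2_eq_square)
  finally show ?thesis by (simp add: divide_inverse)
qed

lemma sfun_pos: "y > 0 \<Longrightarrow> sfun y > 0"
  using tau_pos[of y] by (simp add: sfun_eq_tau)

text \<open>The key point is \<open>\<tau>(1 / s v) = 1 / \<tau> v\<close>.\<close>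
lemma sfun_inverse_sfun: "v > 0 \<Longrightarrow> sfun (1 / sfun v) = 1 / v"
proof -
  assume v: "v > 0"
  define t where "t = tau v"
  have t: "t > 0" using tau_pos[OF v] by (simp add: t_def)
  have "1 / sfun v = (1/t) * (1 + 2 * (1/t))"
    using t by (simp add: sfun_eq_tau[OF v] flip: t_def) (simp add: field_simps power2_eq_square)
  then have "tau (1 / sfun v) = 1/t" using tau_mult_eq[of "1/t"] t by simp
  then have "sfun (1 / sfun v) = (1/t)^2 / (1/t + 2)"
    using sfun_eq_tau sfun_pos[OF v] by simp
  also have "\<dots> = 1 / (t * (1 + 2 * t))" using t by (simp add: field_simps power2_eq_square)
  finally show ?thesis using eq_tau_mult[OF v] by (simp add: t_def)
qed

lemma sneg1_pos: "y > 0 \<Longrightarrow> sneg1 y > 0"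
  unfolding sneg1_def using sfun_pos[of "1/y"] by simp

lemma sfun_sneg1: "y > 0 \<Longrightarrow> sfun (sneg1 y) = y"
  unfolding sneg1_def using sfun_inverse_sfun[of "1/y"] by simp

lemma sneg1_sfun: "y > 0 \<Longrightarrow> sneg1 (sfun y) = y"
  unfolding sneg1_def using sfun_inverse_sfun[of y] by simp

lemma sfun_le: "y > 0 \<Longrightarrow> sfun y \<le> y / 9"
proof -
  assume y: "y > 0"
  define t where "t = tau y"
  have t: "t > 0" using tau_pos[OF y] by (simp add: t_def)
  have "t * (1 + 2 * t) * (t + 2) - 9 * t^2 = 2 * t * (t - 1)^2"
    by (simp add: power2_eq_square algebra_simps)
  moreover have "0 \<le> 2 * t * (t - 1)^2" using t by simp
  ultimately have "9 * t^2 \<le> t * (1 + 2 * t) * (t + 2)" by linarith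
  then have "t^2 / (t + 2) \<le> t * (1 + 2 * t) / 9"
    using t by (simp add: divide_simps mult.commute)
  then show ?thesis
    using sfun_eq_tau[OF y] eq_tau_mult[OF y] by (simp add: t_def)
qed

lemma sneg1_ge: "y > 0 \<Longrightarrow> 9 * y \<le> sneg1 y"
  using sfun_le[of "1/y"] sfun_pos[of "1/y"] by (simp add: sneg1_def field_simps)

lemma cfun_minus_one_ge: "y > 0 \<Longrightarrow> y / 2 \<le> cfun y - 1"
  using eq_tau_mult[of y] tau_pos[of y]
  by (simp add: cfun_minus_one_eq_tau algebra_simps)

lemma cfun_minus_one_pos: "y > 0 \<Longrightarrow> cfun y - 1 > 0"
  using cfun_minus_one_ge[of y] by simp

lemma cfun_minus_one_le: "y > 0 \<Longrightarrow> cfun y - 1 \<le> y * (y + 2)"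
proof -
  assume y: "y > 0"
  have "y = tau y + 2 * (tau y)^2" using eq_tau_mult[OF y] by (simp add: algebra_simps power2_eq_square)
  then have "tau y \<le> y" by (metis add_increasing2 mult_nonneg_nonneg order_refl zero_le_numeral zero_le_power2)
  then show ?thesis
    using tau_pos[OF y] by (simp add: cfun_minus_one_eq_tau mult_mono)
qed

lemma siter_0 [simp]: "siter 0 x = x"
  by (simp add: siter_def)

lemma siter_pos: "x > 0 \<Longrightarrow> siter k x > 0"
proof -
  assume x: "x > 0"
  have "(sfun ^^ n) x > 0" "(sneg1 ^^ n) x > 0" for n
    by (induction n) (simp_all add: x sfun_pos sneg1_pos)
  then show ?thesis by (simp add: siter_def)
qed

lemma siter_succ_nonneg: "k \<ge> 0 \<Longrightarrow> siter (k + 1) x = sfun (siter k x)"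
  by (simp add: siter_def nat_add_distrib)

lemma siter_pred_nonpos: "k \<le> 0 \<Longrightarrow> siter (k - 1) x = sneg1 (siter k x)"
proof -
  assume "k \<le> 0"
  then have "nat (- (k - 1)) = Suc (nat (- k))" by simp
  with \<open>k \<le> 0\<close> show ?thesis by (cases "k = 0") (simp_all add: siter_def)
qed

lemma siter_succ: "x > 0 \<Longrightarrow> siter (k + 1) x = sfun (siter k x)"
  using siter_pred_nonpos[of "k + 1" x] sfun_sneg1[OF siter_pos]
  by (cases "k \<ge> 0") (simp_all add: siter_succ_nonneg)

lemma siter_pred: "x > 0 \<Longrightarrow> siter (k - 1) x = sneg1 (siter k x)"
  using siter_succ[of x "k - 1"] sneg1_sfun[OF siter_pos] by simp

lemma siter_sfun:
  assumes x: "x > 0"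
  shows "siter k (sfun x) = siter (k + 1) x"
proof (induction k rule: int_induct[where k = 0])
  case base show ?case using siter_succ[OF x, of 0] by simp
next
  case (step1 i)
  then show ?case using siter_succ[OF x, of "i + 1"] siter_succ[OF sfun_pos[OF x], of i] by simp
next
  case (step2 i)
  then show ?case using siter_pred[OF x, of "i + 1"] siter_pred[OF sfun_pos[OF x], of i] by simp
qed

lemma siter_eqI:
  assumes "r 0 = x" "\<And>i. r (i + 1) = sfun (r i)" "\<And>i. r i > 0"
  shows "r i = siter i x"
proof (induction i rule: int_induct[where k = 0])
  case base then show ?case using assms(1) by simp
next
  case (step1 i) then show ?case using assms siter_succ[of x i] by fastforce
next
  case (step2 i)
  have "r (i - 1) = sneg1 (r i)" using assms(2)[of "i - 1"] sneg1_sfun[OF assms(3)] by simp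
  then show ?case using step2 assms siter_pred[of x i] by fastforce
qed

lemma siter_nat_le: "x > 0 \<Longrightarrow> siter (int n) x \<le> x / 9 ^ n"
proof (induction n)
  case (Suc n)
  have "siter (int (Suc n)) x \<le> siter (int n) x / 9"
    using siter_succ[OF Suc.prems, of "int n"] sfun_le[OF siter_pos[OF Suc.prems]] by (simp add: add.commute)
  then show ?case using Suc by simp
qed simp

lemma siter_neg_ge: "x > 0 \<Longrightarrow> 9 ^ n * x \<le> siter (- int n) x"
proof (induction n)
  case (Suc n)
  have "- int (Suc n) = - int n - 1" by simp
  then have "siter (- int (Suc n)) x = sneg1 (siter (- int n) x)"
    using siter_pred[OF Suc.prems] by presburger
  then have "9 * siter (- int n) x \<le> siter (- int (Suc n)) x"
    using sneg1_ge[OF siter_pos[OF Suc.prems]] by simp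
  then show ?case using Suc by simp
qed simp

lemma eventually_siter_le: "x > 0 \<Longrightarrow> eventually (\<lambda>n. siter (int n) x \<le> 1/8) sequentially"
proof -
  assume x: "x > 0"
  have "eventually (\<lambda>n. x / 9 ^ n < 1/8) sequentially"
    by (rule order_tendstoD(2)[OF LIMSEQ_divide_realpow_zero]) simp_all
  then show ?thesis by eventually_elim (use siter_nat_le[OF x] in \<open>smt (verit)\<close>)
qed

lemma eventually_siter_neg_ge: "x > 0 \<Longrightarrow> eventually (\<lambda>n. 4 \<le> siter (- int n) x) sequentially"
proof -
  assume x: "x > 0"
  have "eventually (\<lambda>n. (4 / x) / 9 ^ n < 1) sequentially"
    by (rule order_tendstoD(2)[OF LIMSEQ_divide_realpow_zero]) simp_all
  then show ?thesis
  proof eventually_elim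
    case (elim n)
    then have "4 \<le> 9 ^ n * x" using x by (simp add: field_simps)
    then show ?case using siter_neg_ge[OF x, of n] by simp
  qed
qed

section \<open>The series \<open>Z\<close>\<close>

definition cprod :: "real \<Rightarrow> int \<Rightarrow> real" where
  "cprod x = prodZ (\<lambda>i. cj i x - 1)"

lemma cprod_pos: "x > 0 \<Longrightarrow> cprod x k > 0"
  unfolding cprod_def cj_def by (rule prodZ_pos) (use cfun_minus_one_pos[OF siter_pos] in simp)

lemma cprod_rec: "x > 0 \<Longrightarrow> cprod x k = cprod x (k - 1) * (cfun (siter k x) - 1)"
  unfolding cprod_def cj_def
  by (rule prodZ_rec) (metis cfun_minus_one_pos siter_pos less_irrefl)

lemma cprod_minus_one [simp]: "cprod x (-1) = 1"
  by (simp add: cprod_def prodZ_def)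

lemma Zfun_eq_infsum_cprod: "Zfun x = infsum (cprod x) UNIV"
  by (simp add: Zfun_def cprod_def)

lemma cprod_sfun: "x > 0 \<Longrightarrow> cprod x k = (cfun x - 1) * cprod (sfun x) (k - 1)"
proof -
  assume x: "x > 0"
  have shift: "cfun (siter (k - 1) (sfun x)) = cfun (siter k x)" for k
    using siter_sfun[OF x, of "k - 1"] by simp
  have "(cfun x - 1) * cprod (sfun x) (k - 1) = prodZ (\<lambda>i. cj i x - 1) k"
  proof (rule prodZ_unique)
    show "cj i x - 1 \<noteq> 0" for i
      unfolding cj_def by (metis cfun_minus_one_pos siter_pos x less_irrefl)
    show "(cfun x - 1) * cprod (sfun x) (j - 1) = (cfun x - 1) * cprod (sfun x) (j - 1 - 1) * (cj j x - 1)" for j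
      using cprod_rec[OF sfun_pos[OF x], of "j - 1"] shift[of j] by (simp add: cj_def)
    have "cprod (sfun x) (-2) = inverse (cfun x - 1)"
      using shift[of 0] by (simp add: cprod_def prodZ_def cj_def)
    then show "(cfun x - 1) * cprod (sfun x) (-1 - 1) = 1"
      using cfun_minus_one_pos[OF x] by simp
  qed
  then show ?thesis by (simp add: cprod_def)
qed

text \<open>The factors \<open>c(s\<^sub>k x) - 1\<close> tend to \<open>0\<close> as \<open>k \<rightarrow> \<infinity>\<close> and to \<open>\<infinity>\<close> as \<open>k \<rightarrow> -\<infinity>\<close>,
  so the ratio test applies to both halves of the series.\<close>
lemma cprod_summable: "x > 0 \<Longrightarrow> cprod x summable_on UNIV"
proof (rule summable_on_int_nonneg)
  assume x: "x > 0"
  show "cprod x i \<ge> 0" for i using cprod_pos[OF x] less_imp_le by blast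
  show "summable (\<lambda>n. cprod x (int n))"
  proof (rule summable_ratio_test_eventually[where c = "1/2"])
    show "eventually (\<lambda>n. norm (cprod x (int (Suc n))) \<le> 1/2 * norm (cprod x (int n))) sequentially"
      using eventually_siter_le[OF x, THEN eventually_sequentially_Suc[THEN iffD2]]
    proof eventually_elim
      case (elim n)
      define y where "y = siter (int (Suc n)) x"
      have y: "0 < y" "y \<le> 1/8" using elim siter_pos[OF x] by (simp_all add: y_def)
      have "cfun y - 1 \<le> y * (y + 2)" by (rule cfun_minus_one_le[OF y(1)])
      also have "\<dots> \<le> 1/8 * (1/8 + 2)" using y by (intro mult_mono) auto
      finally have "cfun y - 1 \<le> 1/2" by simp
      moreover have "cprod x (int (Suc n)) = cprod x (int n) * (cfun y - 1)"
        using cprod_rec[OF x, of "int (Suc n)"] by (simp add: y_def)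
      ultimately show ?case
        using cprod_pos[OF x, of "int n"] cfun_minus_one_pos[OF y(1)] by (simp add: mult.commute)
    qed
  qed simp
  show "summable (\<lambda>n. cprod x (- int n - 1))"
  proof (rule summable_ratio_test_eventually[where c = "1/2"])
    show "eventually (\<lambda>n. norm (cprod x (- int (Suc n) - 1)) \<le> 1/2 * norm (cprod x (- int n - 1))) sequentially"
      using eventually_siter_neg_ge[OF x, THEN eventually_sequentially_Suc[THEN iffD2]]
    proof eventually_elim
      case (elim n)
      define y where "y = siter (- int n - 1) x"
      have "- int (Suc n) = - int n - 1" by simp
      then have y: "0 < y" "4 \<le> y" using elim siter_pos[OF x] unfolding y_def by metis+
      have "2 \<le> cfun y - 1" using cfun_minus_one_ge[OF y(1)] y(2) by simp
      moreover have "cprod x (- int n - 1) = cprod x (- int (Suc n) - 1) * (cfun y - 1)"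
        using cprod_rec[OF x, of "- int n - 1"] by (simp add: y_def)
      ultimately show ?case
        using cprod_pos[OF x, of "- int (Suc n) - 1"] by simp
    qed
  qed simp
qed

lemma cprod_pred_has_sum: "x > 0 \<Longrightarrow> ((\<lambda>i. cprod x (i - 1)) has_sum Zfun x) UNIV"
  using has_sum_reindex_bij_betw[OF bij_betw_pred_int, of "cprod x"] cprod_summable[of x]
  by (simp add: Zfun_eq_infsum_cprod)

lemma Zfun_pos: "x > 0 \<Longrightarrow> Zfun x > 0"
proof -
  assume x: "x > 0"
  have "cprod x (-1) \<le> infsum (cprod x) UNIV"
    using finite_sum_le_infsum[OF cprod_summable[OF x], of "{-1}"] cprod_pos[OF x] less_imp_le by auto
  then show ?thesis by (simp add: Zfun_eq_infsum_cprod)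
qed

lemma Zfun_sfun: "x > 0 \<Longrightarrow> Zfun x = (cfun x - 1) * Zfun (sfun x)"
proof -
  assume x: "x > 0"
  have "((\<lambda>k. (cfun x - 1) * cprod (sfun x) (k - 1)) has_sum (cfun x - 1) * Zfun (sfun x)) UNIV"
    by (rule has_sum_cmult_right[OF cprod_pred_has_sum[OF sfun_pos[OF x]]])
  moreover have "Zfun x = infsum (\<lambda>k. (cfun x - 1) * cprod (sfun x) (k - 1)) UNIV"
    unfolding Zfun_eq_infsum_cprod by (rule infsum_cong) (rule cprod_sfun[OF x])
  ultimately show ?thesis by (simp add: infsumI)
qed

lemma Zfun_siter_invariant:
  assumes x: "x > 0" and p: "\<And>i. p (i + 1) = (cfun (siter i x) - 1) * p i"
  shows "p i * Zfun (siter i x) = p 0 * Zfun x"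
proof -
  have "p j * Zfun (siter j x) = p (j - 1) * Zfun (siter (j - 1) x)" for j
    using p[of "j - 1"] Zfun_sfun[OF siter_pos[OF x], of "j - 1"] siter_succ[OF x, of "j - 1"] by simp
  then have "p i * Zfun (siter i x) = p 0 * Zfun (siter 0 x)" by (rule int_fun_const)
  then show ?thesis by simp
qed

section \<open>The increments of the standard solution\<close>

definition m_incr :: "real \<Rightarrow> int \<Rightarrow> real" where
  "m_incr x i = 1 / Zfun (siter i x)"

definition n_decr :: "real \<Rightarrow> int \<Rightarrow> real" where
  "n_decr x i = siter i x / Zfun (siter i x)"

definition m_sol :: "real \<Rightarrow> int \<Rightarrow> real" where
  "m_sol x k = infsum (m_incr x) {..k}"

definition n_sol :: "real \<Rightarrow> int \<Rightarrow> real" where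
  "n_sol x k = infsum (n_decr x) {k<..}"

lemma m_incr_pos: "x > 0 \<Longrightarrow> m_incr x i > 0"
  by (simp add: m_incr_def Zfun_pos siter_pos)

lemma n_decr_pos: "x > 0 \<Longrightarrow> n_decr x i > 0"
  by (simp add: n_decr_def Zfun_pos siter_pos)

lemma m_incr_eq_cprod: "x > 0 \<Longrightarrow> m_incr x i = cprod x (i - 1) / Zfun x"
proof -
  assume x: "x > 0"
  have "cprod x (i - 1) * Zfun (siter i x) = cprod x (0 - 1) * Zfun x"
    by (rule Zfun_siter_invariant[OF x, where p = "\<lambda>i. cprod x (i - 1)"])
      (metis cprod_rec[OF x] add_diff_cancel_right' mult.commute)
  then show ?thesis
    using Zfun_pos[OF x] Zfun_pos[OF siter_pos[OF x, of i]] by (simp add: m_incr_def field_simps)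
qed

lemma m_incr_has_sum: "x > 0 \<Longrightarrow> (m_incr x has_sum 1) UNIV"
proof -
  assume x: "x > 0"
  have "((\<lambda>i. inverse (Zfun x) * cprod x (i - 1)) has_sum inverse (Zfun x) * Zfun x) UNIV"
    by (rule has_sum_cmult_right[OF cprod_pred_has_sum[OF x]])
  moreover have "m_incr x = (\<lambda>i. inverse (Zfun x) * cprod x (i - 1))"
    by (rule ext) (simp add: m_incr_eq_cprod[OF x] divide_inverse mult.commute)
  ultimately show ?thesis using Zfun_pos[OF x] by simp
qed

lemma m_incr_summable: "x > 0 \<Longrightarrow> m_incr x summable_on UNIV"
  using m_incr_has_sum by (rule has_sum_imp_summable)

lemma infsum_m_incr: "x > 0 \<Longrightarrow> infsum (m_incr x) UNIV = 1"
  using m_incr_has_sum by (rule infsumI)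

lemma n_decr_summable: "x > 0 \<Longrightarrow> n_decr x summable_on UNIV"
proof (rule summable_on_comparison_test)
  assume x: "x > 0"
  show "(\<lambda>i. 2 / Zfun x * cprod x i) summable_on UNIV"
    using cprod_summable[OF x] by (rule summable_on_cmult_right)
  fix i :: int
  show "0 \<le> n_decr x i" using n_decr_pos[OF x] less_imp_le by blast
  have y: "siter i x > 0" using siter_pos[OF x] .
  have "siter i x * cprod x (i - 1) \<le> 2 * (cfun (siter i x) - 1) * cprod x (i - 1)"
    using cfun_minus_one_ge[OF y] cprod_pos[OF x, of "i - 1"] by (intro mult_right_mono) auto
  also have "\<dots> = 2 * cprod x i" using cprod_rec[OF x, of i] by simp
  finally have "siter i x * cprod x (i - 1) / Zfun x \<le> 2 * cprod x i / Zfun x"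
    using Zfun_pos[OF x] by (intro divide_right_mono) auto
  moreover have "n_decr x i = siter i x * m_incr x i"
    by (simp add: n_decr_def m_incr_def)
  then have "n_decr x i = siter i x * cprod x (i - 1) / Zfun x"
    by (simp add: m_incr_eq_cprod[OF x])
  ultimately show "n_decr x i \<le> 2 / Zfun x * cprod x i" by simp
qed

lemma m_sol_step: "x > 0 \<Longrightarrow> m_sol x k - m_sol x (k - 1) = m_incr x k"
  using infsum_atMost_pred[OF m_incr_summable, of x k] by (simp add: m_sol_def)

lemma n_sol_step: "x > 0 \<Longrightarrow> n_sol x (k - 1) - n_sol x k = n_decr x k"
  using infsum_greaterThan_pred[OF n_decr_summable, of x k] by (simp add: n_sol_def)

lemma m_sol_at_top: "x > 0 \<Longrightarrow> (m_sol x \<longlongrightarrow> 1) at_top"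
proof -
  assume x: "x > 0"
  have "((\<lambda>k. infsum (m_incr x) {..k}) \<longlongrightarrow> infsum (m_incr x) UNIV) at_top"
    by (rule infsum_tendsto_exhausting[OF m_incr_summable[OF x]])
      (use m_incr_pos[OF x] in \<open>auto intro: less_imp_le eventually_atMost_superset\<close>)
  then show ?thesis by (simp add: m_sol_def[abs_def] infsum_m_incr[OF x])
qed

lemma m_sol_at_bot: "x > 0 \<Longrightarrow> (m_sol x \<longlongrightarrow> 0) at_bot"
proof -
  assume x: "x > 0"
  have eq: "m_sol x k = 1 - infsum (m_incr x) {k<..}" for k
    using infsum_atMost_greaterThan[OF m_incr_summable[OF x], of k] infsum_m_incr[OF x]
    unfolding m_sol_def by linarith
  have "((\<lambda>k. infsum (m_incr x) {k<..}) \<longlongrightarrow> infsum (m_incr x) UNIV) at_bot"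
    by (rule infsum_tendsto_exhausting[OF m_incr_summable[OF x]])
      (use m_incr_pos[OF x] in \<open>auto intro: less_imp_le eventually_greaterThan_superset\<close>)
  then have "((\<lambda>k. 1 - infsum (m_incr x) {k<..}) \<longlongrightarrow> 1 - 1) at_bot"
    by (intro tendsto_diff tendsto_const) (simp add: infsum_m_incr[OF x])
  then show ?thesis unfolding eq[abs_def] by simp
qed

lemma n_sol_at_top: "x > 0 \<Longrightarrow> (n_sol x \<longlongrightarrow> 0) at_top"
proof -
  assume x: "x > 0"
  define S where "S = infsum (n_decr x) UNIV"
  have eq: "n_sol x k = S - infsum (n_decr x) {..k}" for k
    using infsum_atMost_greaterThan[OF n_decr_summable[OF x], of k]
    unfolding n_sol_def S_def by linarith
  have "((\<lambda>k. infsum (n_decr x) {..k}) \<longlongrightarrow> S) at_top"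
    unfolding S_def by (rule infsum_tendsto_exhausting[OF n_decr_summable[OF x]])
      (use n_decr_pos[OF x] in \<open>auto intro: less_imp_le eventually_atMost_superset\<close>)
  then have "((\<lambda>k. S - infsum (n_decr x) {..k}) \<longlongrightarrow> S - S) at_top"
    by (intro tendsto_diff tendsto_const)
  then show ?thesis unfolding eq[abs_def] by simp
qed

lemma n_sol_at_bot: "x > 0 \<Longrightarrow> (n_sol x \<longlongrightarrow> infsum (n_decr x) UNIV) at_bot"
  unfolding n_sol_def[abs_def]
  by (rule infsum_tendsto_exhausting[OF n_decr_summable])
    (use n_decr_pos in \<open>auto intro: less_imp_le eventually_greaterThan_superset\<close>)

section \<open>ABMN systems\<close>

lemma increment_system_iff:
  fixes a b p p' :: real
  assumes a: "a > 0" and b: "b > 0"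
  shows "(a * p' - b * p = a * (a + b) \<and> b * (p + p') = (a + b)^2) \<longleftrightarrow> (p = a^2 / b \<and> p' = b + 2 * a)"
proof
  assume H: "a * p' - b * p = a * (a + b) \<and> b * (p + p') = (a + b)^2"
  have "(b * p) * (a + b) = a * (b * (p + p')) - b * (a * p' - b * p)"
    by (simp add: algebra_simps)
  also have "\<dots> = a^2 * (a + b)"
    using H by (simp add: power2_eq_square algebra_simps)
  finally have bp: "b * p = a^2" using a b by simp
  then have "b * p' = b * (b + 2 * a)"
    using H by (simp add: power2_eq_square algebra_simps)
  then have "p' = b + 2 * a" using b by simp
  with bp b show "p = a^2 / b \<and> p' = b + 2 * a" by (simp add: field_simps)
next
  assume "p = a^2 / b \<and> p' = b + 2 * a"
  with a b show "a * p' - b * p = a * (a + b) \<and> b * (p + p') = (a + b)^2"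
    by (simp add: power2_eq_square algebra_simps)
qed

lemma ABMN_equations_iff_increments:
  fixes a b ml mc mr nl nc nr :: real
  assumes a: "a > 0" and b: "b > 0"
  shows "((a + b) * (mc + a) = a * mr + b * ml \<and> (a + b) * (nc + b) = a * nr + b * nl \<and>
          (a + b)^2 = b * (mr - ml) \<and> (a + b)^2 = a * (nl - nr)) \<longleftrightarrow>
         (mc - ml = a^2 / b \<and> mr - mc = b + 2 * a \<and> nl - nc = a + 2 * b \<and> nc - nr = b^2 / a)"
proof -
  have "(a + b) * (mc + a) = a * mr + b * ml \<longleftrightarrow> a * (mr - mc) - b * (mc - ml) = a * (a + b)"
    by (simp add: algebra_simps; argo)
  moreover have "(a + b)^2 = b * (mr - ml) \<longleftrightarrow> b * ((mc - ml) + (mr - mc)) = (a + b)^2"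
    by auto
  moreover have "(a + b) * (nc + b) = a * nr + b * nl \<longleftrightarrow> b * (nl - nc) - a * (nc - nr) = b * (b + a)"
    by (simp add: algebra_simps; argo)
  moreover have "(a + b)^2 = a * (nl - nr) \<longleftrightarrow> a * ((nc - nr) + (nl - nc)) = (b + a)^2"
    by (auto simp: add.commute)
  ultimately show ?thesis
    using increment_system_iff[OF a b, where p = "mc - ml" and p' = "mr - mc"]
      increment_system_iff[OF b a, where p = "nc - nr" and p' = "nl - nc"] by (simp add: add.commute) blast
qed

lemma ABMN_positive_iff_increments:
  "ABMN_positive a b m n \<longleftrightarrow>
    (\<forall>i. a i > 0 \<and> b i > 0 \<and> m i - m (i - 1) = (a i)^2 / b i \<and> m (i + 1) - m i = b i + 2 * a i \<and>
         n (i - 1) - n i = a i + 2 * b i \<and> n i - n (i + 1) = (b i)^2 / a i)"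
proof -
  have "a i > 0 \<Longrightarrow> b i > 0 \<Longrightarrow>
      ((a i + b i) * (m i + a i) = a i * m (i + 1) + b i * m (i - 1) \<and>
       (a i + b i) * (n i + b i) = a i * n (i + 1) + b i * n (i - 1) \<and>
       (a i + b i)^2 = b i * (m (i + 1) - m (i - 1)) \<and> (a i + b i)^2 = a i * (n (i - 1) - n (i + 1))) \<longleftrightarrow>
      (m i - m (i - 1) = (a i)^2 / b i \<and> m (i + 1) - m i = b i + 2 * a i \<and>
       n (i - 1) - n i = a i + 2 * b i \<and> n i - n (i + 1) = (b i)^2 / a i)" for i
    by (rule ABMN_equations_iff_increments)
  then show ?thesis unfolding ABMN_positive_def ABMN_def by (auto simp: less_imp_le)
qed

lemma ABMN_positive_unique_ab:
  assumes "ABMN_positive a b m n" "ABMN_positive a' b' m n"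
  shows "a = a' \<and> b = b'"
proof -
  have eqs: "a i + 2 * b i = a' i + 2 * b' i" "b i + 2 * a i = b' i + 2 * a' i" for i
    using assms unfolding ABMN_positive_iff_increments by auto
  have "a i = a' i \<and> b i = b' i" for i
    using eqs[of i] by (intro conjI; linarith)
  then show ?thesis by (simp add: fun_eq_iff)
qed

lemma candidate_increments:
  fixes x :: real and i :: int
  assumes x: "x > 0"
  defines "A \<equiv> gfun (siter i x)" and "B \<equiv> hfun (siter i x)"
  shows "m_incr x i = A^2 / B" "m_incr x (i + 1) = B + 2 * A"
    and "n_decr x i = A + 2 * B" "n_decr x (i + 1) = B^2 / A"
proof -
  define y where "y = siter i x"
  define t where "t = tau y"
  define Z where "Z = Zfun y"
  have y: "y > 0" using siter_pos[OF x] by (simp add: y_def)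
  have t: "t > 0" using tau_pos[OF y] by (simp add: t_def)
  have Z: "Z > 0" using Zfun_pos[OF y] by (simp add: Z_def)
  have A: "A = t / Z" and B: "B = t^2 / Z"
    using gfun_eq_tau[OF y] hfun_eq_tau[OF y] by (simp_all add: A_def B_def y_def t_def Z_def)
  have succ: "siter (i + 1) x = sfun y" using siter_succ[OF x] by (simp add: y_def)
  have "Z = t * (t + 2) * Zfun (sfun y)"
    using Zfun_sfun[OF y] by (simp add: Z_def t_def cfun_minus_one_eq_tau)
  then have Zs: "Zfun (sfun y) = Z / (t * (t + 2))" using t by simp
  have s: "sfun y = t^2 / (t + 2)" using sfun_eq_tau[OF y] by (simp add: t_def)
  have yt: "y = t * (1 + 2 * t)" using eq_tau_mult[OF y] by (simp add: t_def)
  show "m_incr x i = A^2 / B"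
    using t Z by (simp add: m_incr_def A B flip: y_def Z_def) (simp add: field_simps power2_eq_square)
  show "m_incr x (i + 1) = B + 2 * A"
    using t Z by (simp add: m_incr_def A B succ Zs) (simp add: field_simps power2_eq_square)
  show "n_decr x i = A + 2 * B"
    using t Z by (simp add: n_decr_def A B flip: y_def Z_def) (simp add: yt field_simps power2_eq_square)
  have "n_decr x (i + 1) = (t^2 / (t + 2)) / (Z / (t * (t + 2)))"
    unfolding n_decr_def succ Zs by (simp add: s)
  also have "\<dots> = B^2 / A"
    using t Z by (simp add: A B divide_simps) (simp add: power2_eq_square power4_eq_xxxx algebra_simps)
  finally show "n_decr x (i + 1) = B^2 / A" .
qed

lemma candidate_standard:
  assumes x: "x > 0"
  shows "ABMN_standard (\<lambda>i. gfun (siter i x)) (\<lambda>i. hfun (siter i x)) (m_sol x) (n_sol x)"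
    and "central_ratio (m_sol x) (n_sol x) = x"
proof -
  have pos: "gfun (siter i x) > 0" "hfun (siter i x) > 0" for i
    using tau_pos[OF siter_pos[OF x], of i] Zfun_pos[OF siter_pos[OF x], of i]
    by (auto simp: gfun_eq_tau hfun_eq_tau siter_pos[OF x])
  have "m_sol x (i + 1) - m_sol x i = m_incr x (i + 1)" for i
    using m_sol_step[OF x, of "i + 1"] by simp
  moreover have "n_sol x i - n_sol x (i + 1) = n_decr x (i + 1)" for i
    using n_sol_step[OF x, of "i + 1"] by simp
  ultimately have "ABMN_positive (\<lambda>i. gfun (siter i x)) (\<lambda>i. hfun (siter i x)) (m_sol x) (n_sol x)"
    unfolding ABMN_positive_iff_increments
    using pos candidate_increments[OF x] m_sol_step[OF x] n_sol_step[OF x] by simp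
  then show "ABMN_standard (\<lambda>i. gfun (siter i x)) (\<lambda>i. hfun (siter i x)) (m_sol x) (n_sol x)"
    using m_sol_at_bot[OF x] n_sol_at_top[OF x] m_sol_at_top[OF x] by (simp add: ABMN_standard_def)
  show "central_ratio (m_sol x) (n_sol x) = x"
    using m_sol_step[OF x, of 0] n_sol_step[OF x, of 0] Zfun_pos[OF x]
    by (simp add: central_ratio_def m_incr_def n_decr_def)
qed

text \<open>With \<open>t = b/a\<close> the quotient \<open>(a + 2b)/(a\<^sup>2/b)\<close> equals \<open>t(1 + 2t)\<close>, so its \<open>\<tau>\<close>-parameter is \<open>t\<close>.\<close>
lemma sfun_increment_quotient:
  fixes a b :: real
  assumes a: "a > 0" and b: "b > 0"
  shows "sfun ((a + 2 * b) / (a^2 / b)) = (b^2 / a) / (b + 2 * a)"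
    and "cfun ((a + 2 * b) / (a^2 / b)) - 1 = (b + 2 * a) / (a^2 / b)"
proof -
  define t where "t = b / a"
  have t: "t > 0" using a b by (simp add: t_def)
  have q: "(a + 2 * b) / (a^2 / b) = t * (1 + 2 * t)"
    using a b by (simp add: t_def field_simps power2_eq_square)
  have tau: "tau (t * (1 + 2 * t)) = t" by (rule tau_mult_eq[OF t])
  have "sfun (t * (1 + 2 * t)) = t^2 / (t + 2)"
    using sfun_eq_tau[of "t * (1 + 2 * t)"] t by (simp add: tau)
  also have "\<dots> = (b^2 / a) / (b + 2 * a)"
    using a b by (simp add: t_def field_simps power2_eq_square)
  finally show "sfun ((a + 2 * b) / (a^2 / b)) = (b^2 / a) / (b + 2 * a)"
    by (simp only: q)
  show "cfun ((a + 2 * b) / (a^2 / b)) - 1 = (b + 2 * a) / (a^2 / b)"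
    unfolding q cfun_minus_one_eq_tau tau using a b
    by (simp add: t_def field_simps power2_eq_square)
qed

lemma ABMN_positive_increments_along_orbit:
  assumes sol: "ABMN_positive a b m n" and ratio: "central_ratio m n = x"
  shows "n (i - 1) - n i = siter i x * (m i - m (i - 1))"
    and "m (i + 1) - m i = (cfun (siter i x) - 1) * (m i - m (i - 1))"
proof -
  have a: "a i > 0" and b: "b i > 0"
    and p: "m i - m (i - 1) = (a i)^2 / b i" and p': "m (i + 1) - m i = b i + 2 * a i"
    and q: "n (i - 1) - n i = a i + 2 * b i" and q': "n i - n (i + 1) = (b i)^2 / a i" for i
    using sol unfolding ABMN_positive_iff_increments by auto
  define r where "r i = (n (i - 1) - n i) / (m i - m (i - 1))" for i
  have "r i = siter i x"
  proof (rule siter_eqI)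
    show "r 0 = x" using ratio by (simp add: r_def central_ratio_def)
    show "r (i + 1) = sfun (r i)" for i
      using sfun_increment_quotient(1)[OF a[of i] b[of i]] by (simp add: r_def p p' q q')
    show "r i > 0" for i
      using a[of i] b[of i] by (simp add: r_def p q divide_pos_pos)
  qed
  moreover have pos: "m i - m (i - 1) > 0" using a[of i] b[of i] by (simp add: p divide_pos_pos zero_less_power)
  ultimately show "n (i - 1) - n i = siter i x * (m i - m (i - 1))"
    by (simp add: r_def divide_eq_eq)
  have "cfun (siter i x) - 1 = (m (i + 1) - m i) / (m i - m (i - 1))"
    using sfun_increment_quotient(2)[OF a[of i] b[of i]] \<open>r i = siter i x\<close>
    by (simp add: r_def p p' q)
  then show "m (i + 1) - m i = (cfun (siter i x) - 1) * (m i - m (i - 1))"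
    using pos by (simp add: divide_eq_eq)
qed

lemma ABMN_standard_m_n_eq:
  assumes x: "x > 0" and std: "ABMN_standard a b m n" and ratio: "central_ratio m n = x"
  shows "m = m_sol x" and "n = n_sol x"
proof -
  have sol: "ABMN_positive a b m n" and m_bot: "(m \<longlongrightarrow> 0) at_bot"
    and n_top: "(n \<longlongrightarrow> 0) at_top" and m_top: "(m \<longlongrightarrow> 1) at_top"
    using std by (simp_all add: ABMN_standard_def)
  define K where "K = (m 0 - m (-1)) * Zfun x"
  have "(m i - m (i - 1)) * Zfun (siter i x) = (m 0 - m (0 - 1)) * Zfun x" for i
    by (rule Zfun_siter_invariant[OF x])
      (use ABMN_positive_increments_along_orbit(2)[OF sol ratio] in simp)
  then have m_step: "m i - m (i - 1) = K * m_incr x i" for i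
    using Zfun_pos[OF siter_pos[OF x], of i] by (simp add: K_def m_incr_def field_simps)
  have "m = (\<lambda>k. K * m_sol x k)"
  proof (rule eq_if_same_increments_and_limit[where F = at_bot and L = 0])
    show "m k - m (k - 1) = K * m_sol x k - K * m_sol x (k - 1)" for k
      using m_step[of k] m_sol_step[OF x, of k] by (simp add: right_diff_distrib[symmetric])
    show "((\<lambda>k. K * m_sol x k) \<longlongrightarrow> 0) at_bot"
      using tendsto_mult_left[OF m_sol_at_bot[OF x], of K] by simp
  qed (simp_all add: m_bot)
  moreover have "((\<lambda>k. K * m_sol x k) \<longlongrightarrow> K * 1) at_top"
    by (rule tendsto_mult_left[OF m_sol_at_top[OF x]])
  ultimately have "K = 1" using m_top tendsto_unique[OF trivial_limit_at_top_linorder] by fastforce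
  with \<open>m = (\<lambda>k. K * m_sol x k)\<close> show "m = m_sol x" by simp
  show "n = n_sol x"
  proof (rule eq_if_same_increments_and_limit[where F = at_top and L = 0])
    show "n k - n (k - 1) = n_sol x k - n_sol x (k - 1)" for k
      using ABMN_positive_increments_along_orbit(1)[OF sol ratio, of k] m_step[of k] \<open>K = 1\<close>
        n_sol_step[OF x, of k] by (simp add: m_incr_def n_decr_def)
  qed (simp_all add: n_top n_sol_at_top[OF x])
qed

lemma st_eq:
  assumes x: "x > 0"
  shows "st x = ((\<lambda>i. gfun (siter i x)), (\<lambda>i. hfun (siter i x)), m_sol x, n_sol x)"
  unfolding st_def
proof (rule the_equality)
  show "case ((\<lambda>i. gfun (siter i x)), (\<lambda>i. hfun (siter i x)), m_sol x, n_sol x) of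
      (a, b, m, n) \<Rightarrow> ABMN_standard a b m n \<and> central_ratio m n = x"
    using candidate_standard[OF x] by simp
next
  fix s assume "case s of (a, b, m, n) \<Rightarrow> ABMN_standard a b m n \<and> central_ratio m n = x"
  then obtain a b m n where s: "s = (a, b, m, n)"
    and std: "ABMN_standard a b m n" and ratio: "central_ratio m n = x"
    by (cases s) auto
  have "m = m_sol x" "n = n_sol x" using ABMN_standard_m_n_eq[OF x std ratio] by simp_all
  then have "a = (\<lambda>i. gfun (siter i x)) \<and> b = (\<lambda>i. hfun (siter i x))"
    using std candidate_standard(1)[OF x]
    by (intro ABMN_positive_unique_ab) (simp_all add: ABMN_standard_def)
  with \<open>m = m_sol x\<close> \<open>n = n_sol x\<close> show "s = ((\<lambda>i. gfun (siter i x)), (\<lambda>i. hfun (siter i x)), m_sol x, n_sol x)"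
    by (simp add: s)
qed

lemma st_components:
  assumes "x > 0"
  shows "ast x = (\<lambda>i. gfun (siter i x))" "bst x = (\<lambda>i. hfun (siter i x))"
    and "mst x = m_sol x" "nst x = n_sol x"
  by (simp_all add: ast_def bst_def mst_def nst_def st_eq[OF assms])

lemma mst_diff:
  "x > 0 \<Longrightarrow> j \<le> k \<Longrightarrow> mst x k - mst x j = (\<Sum>i\<in>{j + 1..k}. 1 / Zfun (siter i x))"
  using sum_telescope_int[of j k "m_sol x"] m_sol_step[of x]
  by (simp add: st_components m_incr_def)

lemma nst_diff:
  "x > 0 \<Longrightarrow> j \<le> k \<Longrightarrow> nst x j - nst x k = (\<Sum>i\<in>{j + 1..k}. siter i x / Zfun (siter i x))"
  using sum_telescope_int[of j k "\<lambda>i. - n_sol x i"] n_sol_step[of x]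
  by (simp add: st_components n_decr_def)

lemma Mpr_eq:
  assumes "x > 0"
  shows "Mpr (j + 1) (k + 1) x =
    inverse (\<Sum>i\<in>{- int j..int k + 1}. 1 / Zfun (siter i x)) *
    (\<Sum>i\<in>{- int j..int k + 1}. siter i x / Zfun (siter i x))"
proof -
  have "{- int (j + 1) + 1..int (k + 1)} = {- int j..int k + 1}" by simp
  then show ?thesis
    using mst_diff[OF assms, of "- int (j + 1)" "int (k + 1)"]
      nst_diff[OF assms, of "- int (j + 1)" "int (k + 1)"]
    by (simp add: Mpr_def divide_inverse mult.commute add.commute)
qed

lemma Mlim_eq: "x > 0 \<Longrightarrow> Mlim x = (\<Sum>\<^sub>\<infinity>i. siter i x / Zfun (siter i x))"
  using n_sol_at_bot[of x] by (simp add: Mlim_def st_components tendsto_Lim n_decr_def[abs_def])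

theorem mainTheorem19:
  fixes x :: real
  assumes "x > 0"
  shows "(\<forall>k::int. ast x k = gfun (siter k x) \<and> bst x k = hfun (siter k x))
    \<and> (\<forall>j k :: int. j < k \<longrightarrow>
          mst x k - mst x j = (\<Sum>i\<in>{j+1..k}. 1 / Zfun (siter i x)) \<and>
          nst x j - nst x k = (\<Sum>i\<in>{j+1..k}. siter i x / Zfun (siter i x)))
    \<and> (\<forall>k::int. mst x k - mst x (k-1) = inverse (Zfun (siter k x)) \<and>
          nst x (k-1) - nst x k = siter k x * inverse (Zfun (siter k x)))
    \<and> (\<forall>j k :: nat. Mpr (j+1) (k+1) x =
          inverse (\<Sum>i\<in>{- int j..int k + 1}. 1 / Zfun (siter i x)) *
          (\<Sum>i\<in>{- int j..int k + 1}. siter i x / Zfun (siter i x)))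
    \<and> Mlim x = (\<Sum>\<^sub>\<infinity>i\<in>(UNIV::int set). siter i x / Zfun (siter i x))"
proof (intro conjI allI impI)
  fix k :: int
  show "ast x k = gfun (siter k x)" "bst x k = hfun (siter k x)"
    by (simp_all add: st_components[OF assms])
  show "mst x k - mst x (k - 1) = inverse (Zfun (siter k x))"
    using mst_diff[OF assms, of "k - 1" k] by (simp add: divide_inverse)
  show "nst x (k - 1) - nst x k = siter k x * inverse (Zfun (siter k x))"
    using nst_diff[OF assms, of "k - 1" k] by (simp add: divide_inverse)
next
  fix j k :: int
  assume "j < k"
  then show "mst x k - mst x j = (\<Sum>i\<in>{j+1..k}. 1 / Zfun (siter i x))"
    and "nst x j - nst x k = (\<Sum>i\<in>{j+1..k}. siter i x / Zfun (siter i x))"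
    using mst_diff[OF assms] nst_diff[OF assms] by simp_all
next
  fix j k :: nat
  show "Mpr (j+1) (k+1) x =
          inverse (\<Sum>i\<in>{- int j..int k + 1}. 1 / Zfun (siter i x)) *
          (\<Sum>i\<in>{- int j..int k + 1}. siter i x / Zfun (siter i x))"
    by (rule Mpr_eq[OF assms])
next
  show "Mlim x = (\<Sum>\<^sub>\<infinity>i\<in>(UNIV::int set). siter i x / Zfun (siter i x))"
    by (rule Mlim_eq[OF assms])
qed

end
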